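(* For all Maya diagrams $\sigma,\sigma'$, \[ \langle\sigma',A(x;t)\sigma\rangle=\sum_{h}\prod_{i\in\mathbb{Z}}\Omega(h_{i-1},\sigma_i,h_i,\sigma'_i), \] where the sum runs over all row configurations $h$ from $\sigma$ to $\sigma'$ and the vertex weights are $\omega_1=\omega_3=\omega_5=1$, $\omega_2=-x$, $\omega_4=tx$, $\omega_6=(t-1)x$.
   Context: Maya diagrams are maps $\sigma:\mathbb{Z}\to\{0,1\}$ with $\sigma_i=1$ for $i\ll0$ and $\sigma_i=0$ for $i\gg0$. $\mathcal{F}(t)$ is the $\mathbb{C}(t)$-space with basis the Maya diagrams, with the bilinear form $\langle\cdot,\cdot\rangle$ making them orthonormal. Operators: $\psi^+_i(t)\sigma=(\sigma+\epsilon_i)\prod_{j>i}(-t)^{\sigma_j}$ if $\sigma_i=0$, else $0$; $\psi^-_i(t)\sigma=(\sigma-\epsilon_i)\prod_{j>i}(-t)^{-\sigma_j}$ if $\sigma_i=1$, else $0$ ($\epsilon_i$ the indicator of $i$); $E_{ij}(t)=(1-t)\psi_i^-(t)\psi_j^+(t)$; $A(x;t)=1+\sum_{r>0}\sum_{i_1<j_1<\cdots<i_r<j_r}(xt)^{j_1-i_1+\cdots+j_r-i_r}E_{i_1j_1}(t)\cdots E_{i_rj_r}(t)$. Six-vertex row configurations: a vertex is a 4-tuple (W,N,E,S) of edge values in $\{0,1\}$; the allowed ones and their weights are $\Omega(0,0,0,0)=\omega_1$, $\Omega(1,1,1,1)=\omega_2$, $\Omega(0,1,0,1)=\omega_3$,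 $\Omega(1,0,1,0)=\omega_4$, $\Omega(1,0,0,1)=\omega_5$, $\Omega(0,1,1,0)=\omega_6$, and $\Omega=0$ for all other tuples. A row configuration from $\sigma$ (top) to $\sigma'$ (bottom) is a map $h:\mathbb{Z}\to\{0,1\}$ ($h_i$ the horizontal edge between vertices $i$ and $i+1$) with $h_i=0$ for all $|i|$ sufficiently large and such that $(h_{i-1},\sigma_i,h_i,\sigma'_i)$ is allowed for every $i$. *)

theory Defs
  imports Main "HOL-Library.Groups_Big_Fun"
begin

(* A diagram is a map int => bool (True = 1, False = 0). *)
type_synonym diagram = "int \<Rightarrow> bool"

definition maya :: "diagram \<Rightarrow> bool" where
  "maya \<sigma> \<longleftrightarrow> (\<exists>a. \<forall>i<a. \<sigma> i) \<and> (\<exists>b. \<forall>i>b. \<not> \<sigma> i)"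

(* Vectors of the Fock space: coefficient functions on diagrams
   (elements of F(t) are the finitely supported ones, supported on Maya diagrams). *)
type_synonym 'a vec = "diagram \<Rightarrow> 'a"

definition basis :: "diagram \<Rightarrow> 'a::field vec" where
  "basis \<sigma> = (\<lambda>\<tau>. if \<tau> = \<sigma> then 1 else 0)"

definition pair :: "'a::field vec \<Rightarrow> 'a vec \<Rightarrow> 'a" where
  "pair u v = (\<Sum>\<tau>. u \<tau> * v \<tau>)"

definition lin :: "(diagram \<Rightarrow> 'a::field vec) \<Rightarrow> 'a vec \<Rightarrow> 'a vec" where
  "lin L v = (\<lambda>\<tau>. \<Sum>\<rho>. v \<rho> * L \<rho> \<tau>)"

definition scale :: "'a::field \<Rightarrow> 'a vec \<Rightarrow> 'a vec" where
  "scale c v = (\<lambda>\<tau>. c * v \<tau>)"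

definition sign_above :: "'a::field \<Rightarrow> int \<Rightarrow> diagram \<Rightarrow> 'a" where
  "sign_above t i \<sigma> = (- t) ^ card {j. i < j \<and> \<sigma> j}"

definition psi_plus :: "'a::field \<Rightarrow> int \<Rightarrow> 'a vec \<Rightarrow> 'a vec" where
  "psi_plus t i = lin (\<lambda>\<sigma>. if \<not> \<sigma> i
       then scale (sign_above t i \<sigma>) (basis (\<sigma>(i := True))) else (\<lambda>_. 0))"

definition psi_minus :: "'a::field \<Rightarrow> int \<Rightarrow> 'a vec \<Rightarrow> 'a vec" where
  "psi_minus t i = lin (\<lambda>\<sigma>. if \<sigma> i
       then scale (inverse (sign_above t i \<sigma>)) (basis (\<sigma>(i := False))) else (\<lambda>_. 0))"

definition E_op :: "'a::field \<Rightarrow> int \<Rightarrow> int \<Rightarrow> 'a vec \<Rightarrow> 'a vec" where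
  "E_op t i j v = scale (1 - t) (psi_minus t i (psi_plus t j v))"

definition admissible :: "(int \<times> int) list \<Rightarrow> bool" where
  "admissible ps \<longleftrightarrow> ps \<noteq> [] \<and> sorted_wrt (<) (concat (map (\<lambda>(i, j). [i, j]) ps))"

definition degree_of :: "(int \<times> int) list \<Rightarrow> nat" where
  "degree_of ps = sum_list (map (\<lambda>(i, j). nat (j - i)) ps)"

(* E_{i1 j1} ... E_{ir jr} v  (E_{ir jr} applied first) *)
definition E_prod :: "'a::field \<Rightarrow> (int \<times> int) list \<Rightarrow> 'a vec \<Rightarrow> 'a vec" where
  "E_prod t ps v = foldr (\<lambda>(i, j) w. E_op t i j w) ps v"

(* A(x;t) v, computed coefficientwise (each coefficient is a finite sum) *)
definition A_op :: "'a::field \<Rightarrow> 'a \<Rightarrow> 'a vec \<Rightarrow> 'a vec" where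
  "A_op x t v = (\<lambda>\<tau>. v \<tau> +
     (\<Sum>ps. if admissible ps then (x * t) ^ degree_of ps * E_prod t ps v \<tau> else 0))"

definition Omega :: "'a \<Rightarrow> 'a \<Rightarrow> 'a \<Rightarrow> 'a \<Rightarrow> 'a \<Rightarrow> 'a \<Rightarrow>
    bool \<Rightarrow> bool \<Rightarrow> bool \<Rightarrow> bool \<Rightarrow> 'a::zero" where
  "Omega w1 w2 w3 w4 w5 w6 W N E S =
     (if (W, N, E, S) = (False, False, False, False) then w1
      else if (W, N, E, S) = (True, True, True, True) then w2
      else if (W, N, E, S) = (False, True, False, True) then w3
      else if (W, N, E, S) = (True, False, True, False) then w4
      else if (W, N, E, S) = (True, False, False, True) then w5
      else if (W, N, E, S) = (False, True, True, False) then w6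
      else 0)"

definition allowed :: "bool \<Rightarrow> bool \<Rightarrow> bool \<Rightarrow> bool \<Rightarrow> bool" where
  "allowed W N E S \<longleftrightarrow> (W, N, E, S) \<in>
     {(False, False, False, False), (True, True, True, True), (False, True, False, True),
      (True, False, True, False), (True, False, False, True), (False, True, True, False)}"

(* row configuration from sigma (top) to sigma' (bottom); h i = edge between vertices i and i+1 *)
definition row_config :: "diagram \<Rightarrow> diagram \<Rightarrow> (int \<Rightarrow> bool) \<Rightarrow> bool" where
  "row_config \<sigma> \<sigma>' h \<longleftrightarrow> (\<exists>N. \<forall>i. \<bar>i\<bar> \<ge> N \<longrightarrow> \<not> h i)
     \<and> (\<forall>i. allowed (h (i - 1)) (\<sigma> i) (h i) (\<sigma>' i))"

end

theory Submission
  imports Defs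
begin

(* For i < j the operator E_ij moves the particle at site i of a Maya diagram to the empty site j,
   with coefficient (1 - t) / (-t)^(m+1), where m counts the particles strictly between i and j.
   So an admissible product E_{i1 j1} ... E_{ir jr} sends sigma to a multiple of a single diagram,
   and the sites i1 < j1 < ... < jr are recovered as the sites where sigma and the image differ:
   the coefficient of sigma' in A(x;t) sigma is a sum over at most one admissible list.
   On the vertex side, a row configuration is determined by its top and bottom rows (the east edge
   of a vertex is forced by its other three edges), and its occupied horizontal edges are exactly
   the intervals [i_k, j_k) of such a list. Along one interval the vertex weights are (t - 1) x,
   then -x or t x according as the site is occupied, then 1; their product
   (t - 1) x (-x)^m (t x)^(j-i-1-m) equals (x t)^(j-i) (1 - t) / (-t)^(m+1). *)

lemma pair_basis: "pair (basis \<sigma>') v = v \<sigma>'"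
proof -
  have eq: "(\<lambda>\<tau>. basis \<sigma>' \<tau> * v \<tau>) = (\<lambda>\<tau>. if \<tau> = \<sigma>' then v \<tau> else 0)"
    by (rule ext) (simp add: basis_def)
  show ?thesis unfolding pair_def eq by simp
qed

lemma lin_scale_basis: "lin L (scale c (basis \<sigma>)) = scale c (L \<sigma>)"
proof
  fix \<tau>
  have eq: "(\<lambda>\<rho>. scale c (basis \<sigma>) \<rho> * L \<rho> \<tau>) = (\<lambda>\<rho>. if \<rho> = \<sigma> then c * L \<sigma> \<tau> else 0)"
    by (rule ext) (simp add: scale_def basis_def)
  show "lin L (scale c (basis \<sigma>)) \<tau> = scale c (L \<sigma>) \<tau>"
    unfolding lin_def eq by (simp add: scale_def)
qed

lemma lin_zero [simp]: "lin L (\<lambda>_. 0) = (\<lambda>_. 0)"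
  by (simp add: lin_def)

lemma scale_zero [simp]: "scale c (\<lambda>_. 0) = (\<lambda>_. 0)"
  by (simp add: scale_def)

lemma scale_scale: "scale c (scale d v) = scale (c * d) v"
  by (simp add: scale_def mult.assoc)

lemma psi_plus_basis:
  "psi_plus t j (scale c (basis \<tau>)) =
    (if \<tau> j then (\<lambda>_. 0) else scale (c * sign_above t j \<tau>) (basis (\<tau>(j := True))))"
  by (simp add: psi_plus_def lin_scale_basis scale_scale mult.commute)

lemma psi_minus_basis:
  "psi_minus t i (scale c (basis \<tau>)) =
    (if \<tau> i then scale (c * inverse (sign_above t i \<tau>)) (basis (\<tau>(i := False))) else (\<lambda>_. 0))"
  by (simp add: psi_minus_def lin_scale_basis scale_scale mult.commute)

lemma maya_fun_upd: "maya \<sigma> \<Longrightarrow> maya (\<sigma>(i := b))"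
  unfolding maya_def
proof (elim conjE exE)
  fix a c assume "\<forall>k<a. \<sigma> k" "\<forall>k>c. \<not> \<sigma> k"
  then have "\<forall>k<min a i. (\<sigma>(i := b)) k" "\<forall>k>max c i. \<not> (\<sigma>(i := b)) k" by auto
  then show "(\<exists>a. \<forall>k<a. (\<sigma>(i := b)) k) \<and> (\<exists>c. \<forall>k>c. \<not> (\<sigma>(i := b)) k)" by blast
qed

lemma maya_finite_above: "maya \<sigma> \<Longrightarrow> finite {k. i < k \<and> \<sigma> k}"
proof -
  assume "maya \<sigma>"
  then obtain b where "\<And>k. b < k \<Longrightarrow> \<not> \<sigma> k" unfolding maya_def by blast
  then have "{k. i < k \<and> \<sigma> k} \<subseteq> {i..b}" by (auto simp: not_less[symmetric])
  then show ?thesis by (rule finite_subset) simp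
qed

lemma maya_finite_differ: "maya \<sigma> \<Longrightarrow> maya \<tau> \<Longrightarrow> finite {k. \<sigma> k \<noteq> \<tau> k}"
proof -
  assume "maya \<sigma>" "maya \<tau>"
  then obtain a1 a2 b1 b2 where
    "\<forall>k<a1. \<sigma> k" "\<forall>k<a2. \<tau> k" "\<forall>k>b1. \<not> \<sigma> k" "\<forall>k>b2. \<not> \<tau> k"
    unfolding maya_def by blast
  then have "{k. \<sigma> k \<noteq> \<tau> k} \<subseteq> {min a1 a2..max b1 b2}" by (auto simp: not_less[symmetric])
  then show ?thesis by (rule finite_subset) simp
qed

lemma sign_above_fun_upd:
  assumes "maya \<tau>" "i < j" "\<not> \<tau> j"
  shows "sign_above t i (\<tau>(j := True)) =
    (- t) ^ (card {k. i < k \<and> k < j \<and> \<tau> k} + 1) * sign_above t j \<tau>"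
proof -
  let ?A = "{k. i < k \<and> k < j \<and> \<tau> k}" and ?B = "{k. j < k \<and> \<tau> k}"
  have "{k. i < k \<and> (\<tau>(j := True)) k} = insert j (?A \<union> ?B)"
    using assms(2) by auto
  moreover have "finite ?B" using assms(1) by (rule maya_finite_above)
  moreover have "finite ?A" by (rule finite_subset[of _ "{i..j}"]) auto
  ultimately have "card {k. i < k \<and> (\<tau>(j := True)) k} = card ?A + 1 + card ?B"
    by (simp add: card_Un_disjoint disjoint_iff)
  then show ?thesis by (simp add: sign_above_def power_add)
qed

definition hop_coeff :: "'a::field \<Rightarrow> diagram \<Rightarrow> int \<Rightarrow> int \<Rightarrow> 'a" where
  "hop_coeff t \<sigma> i j = (1 - t) * inverse ((- t) ^ (card {k. i < k \<and> k < j \<and> \<sigma> k} + 1))"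

lemma E_op_zero [simp]: "E_op t i j (\<lambda>_. 0) = (\<lambda>_. 0)"
  by (simp add: E_op_def psi_plus_def psi_minus_def)

lemma E_op_basis:
  fixes t :: "'a::field"
  assumes "t \<noteq> 0" "maya \<tau>" "i < j"
  shows "E_op t i j (scale c (basis \<tau>)) =
    (if \<tau> i \<and> \<not> \<tau> j then scale (c * hop_coeff t \<tau> i j) (basis (\<tau>(i := False, j := True)))
     else (\<lambda>_. 0))"
proof (cases "\<tau> i \<and> \<not> \<tau> j")
  case True
  have "sign_above t j \<tau> \<noteq> 0" using assms(1) by (simp add: sign_above_def)
  moreover have "\<tau>(j := True, i := False) = \<tau>(i := False, j := True)"
    using assms(3) by (simp add: fun_upd_twist)
  ultimately show ?thesis using True assms(1,3) sign_above_fun_upd[OF assms(2,3), of t]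
    by (simp add: E_op_def psi_plus_basis psi_minus_basis scale_scale hop_coeff_def field_simps)
next
  case False
  then show ?thesis using assms(3)
    by (auto simp: E_op_def psi_plus_basis psi_minus_def lin_scale_basis)
qed

fun endpoints :: "(int \<times> int) list \<Rightarrow> int list" where
  "endpoints [] = []"
| "endpoints ((i, j) # r) = i # j # endpoints r"

lemma admissible_iff_endpoints: "admissible ps \<longleftrightarrow> ps \<noteq> [] \<and> sorted_wrt (<) (endpoints ps)"
proof -
  have "concat (map (\<lambda>(i, j). [i, j]) ps) = endpoints ps"
    by (induction ps rule: endpoints.induct) auto
  then show ?thesis by (simp add: admissible_def)
qed

lemma endpoints_inj: "endpoints ps = endpoints qs \<Longrightarrow> ps = qs"
proof (induction ps arbitrary: qs rule: endpoints.induct)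
  case 1
  then show ?case by (cases qs rule: endpoints.cases) auto
next
  case (2 i j r)
  then show ?case by (cases qs rule: endpoints.cases) auto
qed

fun apply_hops :: "(int \<times> int) list \<Rightarrow> diagram \<Rightarrow> diagram" where
  "apply_hops [] \<sigma> = \<sigma>"
| "apply_hops ((i, j) # r) \<sigma> = (apply_hops r \<sigma>)(i := False, j := True)"

fun hops_enabled :: "diagram \<Rightarrow> (int \<times> int) list \<Rightarrow> bool" where
  "hops_enabled \<sigma> [] \<longleftrightarrow> True"
| "hops_enabled \<sigma> ((i, j) # r) \<longleftrightarrow> \<sigma> i \<and> \<not> \<sigma> j \<and> hops_enabled \<sigma> r"

fun hops_coeff :: "'a::field \<Rightarrow> diagram \<Rightarrow> (int \<times> int) list \<Rightarrow> 'a" where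
  "hops_coeff t \<sigma> [] = 1"
| "hops_coeff t \<sigma> ((i, j) # r) = hop_coeff t \<sigma> i j * hops_coeff t \<sigma> r"

lemma apply_hops_outside: "l \<notin> set (endpoints ps) \<Longrightarrow> apply_hops ps \<sigma> l = \<sigma> l"
  by (induction ps rule: endpoints.induct) auto

lemma maya_apply_hops: "maya \<sigma> \<Longrightarrow> maya (apply_hops ps \<sigma>)"
  by (induction ps \<sigma> rule: apply_hops.induct) (auto intro!: maya_fun_upd)

lemma hop_coeff_cong:
  assumes "\<And>k. i < k \<Longrightarrow> k < j \<Longrightarrow> \<sigma> k = \<tau> k"
  shows "hop_coeff t \<sigma> i j = hop_coeff t \<tau> i j"
proof -
  have "{k. i < k \<and> k < j \<and> \<sigma> k} = {k. i < k \<and> k < j \<and> \<tau> k}" using assms by auto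
  then show ?thesis by (simp add: hop_coeff_def)
qed

lemma E_prod_basis:
  fixes t :: "'a::field"
  assumes "t \<noteq> 0" "maya \<sigma>" "sorted_wrt (<) (endpoints ps)"
  shows "E_prod t ps (scale c (basis \<sigma>)) =
    (if hops_enabled \<sigma> ps then scale (c * hops_coeff t \<sigma> ps) (basis (apply_hops ps \<sigma>))
     else (\<lambda>_. 0))"
  using assms(3)
proof (induction ps rule: endpoints.induct)
  case 1
  then show ?case by (simp add: E_prod_def)
next
  case (2 i j r)
  then have "i < j" and IH: "E_prod t r (scale c (basis \<sigma>)) =
      (if hops_enabled \<sigma> r then scale (c * hops_coeff t \<sigma> r) (basis (apply_hops r \<sigma>))
       else (\<lambda>_. 0))"
    by auto
  have left: "apply_hops r \<sigma> l = \<sigma> l" if "l \<le> j" for l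
    using "2.prems" that by (intro apply_hops_outside) force
  then have "hop_coeff t (apply_hops r \<sigma>) i j = hop_coeff t \<sigma> i j"
    by (intro hop_coeff_cong) simp
  then show ?case
    using IH left[of i] left[of j] \<open>i < j\<close> E_op_basis[OF assms(1) maya_apply_hops[OF assms(2)]]
    by (simp add: E_prod_def mult.commute mult.left_commute fun_upd_def)
qed

lemma set_endpoints_eq_differ:
  assumes "sorted_wrt (<) (endpoints ps)" "hops_enabled \<sigma> ps"
  shows "set (endpoints ps) = {l. \<sigma> l \<noteq> apply_hops ps \<sigma> l}"
  using assms
proof (induction ps rule: endpoints.induct)
  case 1
  then show ?case by simp
next
  case (2 i j r)
  then have "i \<notin> set (endpoints r)" "j \<notin> set (endpoints r)" by force+
  with 2 show ?case by auto
qed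

lemma hops_unique:
  assumes "sorted_wrt (<) (endpoints ps)" "hops_enabled \<sigma> ps"
    and "sorted_wrt (<) (endpoints qs)" "hops_enabled \<sigma> qs"
    and "apply_hops ps \<sigma> = apply_hops qs \<sigma>"
  shows "ps = qs"
proof (rule endpoints_inj)
  have "set (endpoints ps) = set (endpoints qs)"
    using assms by (simp add: set_endpoints_eq_differ)
  then show "endpoints ps = endpoints qs"
    using assms(1,3) by (metis sorted_distinct_set_unique strict_sorted_iff)
qed

lemma allowed_right_unique: "allowed W N E S \<Longrightarrow> allowed W N E' S \<Longrightarrow> E = E'"
  unfolding allowed_def by auto

lemma allowed_same_edges: "allowed W N W S \<Longrightarrow> N = S"
  unfolding allowed_def by auto

lemma row_config_unique:
  assumes "row_config \<sigma> \<sigma>' h" "row_config \<sigma> \<sigma>' h'"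
  shows "h = h'"
proof
  fix l
  obtain N1 N2 where "\<And>k. \<bar>k\<bar> \<ge> N1 \<Longrightarrow> \<not> h k" "\<And>k. \<bar>k\<bar> \<ge> N2 \<Longrightarrow> \<not> h' k"
    using assms unfolding row_config_def by blast
  then have far: "\<not> h k \<and> \<not> h' k" if "k \<le> - \<bar>N1\<bar> - \<bar>N2\<bar>" for k
    using that by force
  show "h l = h' l"
  proof (cases "l \<le> - \<bar>N1\<bar> - \<bar>N2\<bar>")
    case True
    then show ?thesis using far by simp
  next
    case False
    then have "- \<bar>N1\<bar> - \<bar>N2\<bar> \<le> l" by simp
    then show ?thesis
    proof (induction l rule: int_ge_induct)
      case base
      then show ?case using far by simp
    next
      case (step k)
      have "allowed (h k) (\<sigma> (k + 1)) (h (k + 1)) (\<sigma>' (k + 1))"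
        "allowed (h' k) (\<sigma> (k + 1)) (h' (k + 1)) (\<sigma>' (k + 1))"
        using assms unfolding row_config_def by (auto elim!: allE[of _ "k + 1"])
      with step.IH show ?case
        using allowed_right_unique[of "h k" "\<sigma> (k + 1)" "h (k + 1)" "\<sigma>' (k + 1)"] by simp
    qed
  qed
qed

lemma finite_row_config_edges: "row_config \<sigma> \<sigma>' h \<Longrightarrow> finite {l. h l}"
proof -
  assume "row_config \<sigma> \<sigma>' h"
  then obtain N where "\<And>l. \<bar>l\<bar> \<ge> N \<Longrightarrow> \<not> h l" unfolding row_config_def by blast
  then have "{l. h l} \<subseteq> {-N..N}" by force
  then show ?thesis by (rule finite_subset) simp
qed

definition row_weight :: "'a::field \<Rightarrow> 'a \<Rightarrow> diagram \<Rightarrow> diagram \<Rightarrow> (int \<Rightarrow> bool) \<Rightarrow> int \<Rightarrow> 'a" where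
  "row_weight x t \<sigma> \<sigma>' h l =
     Omega 1 (- x) 1 (t * x) 1 ((t - 1) * x) (h (l - 1)) (\<sigma> l) (h l) (\<sigma>' l)"

lemma row_weight_empty_edge:
  "\<sigma> l = \<sigma>' l \<Longrightarrow> \<not> h (l - 1) \<Longrightarrow> \<not> h l \<Longrightarrow> row_weight x t \<sigma> \<sigma>' h l = 1"
  unfolding row_weight_def Omega_def by (cases "\<sigma> l") auto

lemma finite_row_weight_ne_1:
  assumes "row_config \<sigma> \<sigma>' h" "maya \<sigma>" "maya \<sigma>'"
  shows "finite {l. row_weight x t \<sigma> \<sigma>' h l \<noteq> 1}"
proof -
  have "{l. row_weight x t \<sigma> \<sigma>' h l \<noteq> 1} \<subseteq>
      {l. \<sigma> l \<noteq> \<sigma>' l} \<union> {l. h l} \<union> (\<lambda>l. l + 1) ` {l. h l}"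
  proof (rule subsetI, rule ccontr)
    fix l
    assume "l \<notin> {l. \<sigma> l \<noteq> \<sigma>' l} \<union> {l. h l} \<union> (\<lambda>l. l + 1) ` {l. h l}"
    then have "\<sigma> l = \<sigma>' l" "\<not> h l" "\<not> h (l - 1)" by (auto simp: image_iff)
    moreover assume "l \<in> {l. row_weight x t \<sigma> \<sigma>' h l \<noteq> 1}"
    ultimately show False using row_weight_empty_edge[of \<sigma> l \<sigma>' h x t] by simp
  qed
  moreover have "finite ({l. \<sigma> l \<noteq> \<sigma>' l} \<union> {l. h l} \<union> (\<lambda>l. l + 1) ` {l. h l})"
    using maya_finite_differ[OF assms(2,3)] finite_row_config_edges[OF assms(1)] by simp
  ultimately show ?thesis by (rule finite_subset)
qed

lemma Prod_any_eq_mult_prod: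
  fixes f g :: "'b \<Rightarrow> 'a::comm_monoid_mult"
  assumes "finite {l. f l \<noteq> 1}" "finite A"
    and "\<And>l. l \<notin> A \<Longrightarrow> g l = f l" and "\<And>l. l \<in> A \<Longrightarrow> f l = 1"
  shows "Prod_any g = Prod_any f * prod g A"
proof -
  let ?S = "{l. f l \<noteq> 1}"
  have "?S \<inter> A = {}" using assms(4) by blast
  then have "Prod_any g = prod g ?S * prod g A"
    using assms by (subst Prod_any.expand_superset[of "?S \<union> A"]) (auto simp: prod.union_disjoint)
  also have "prod g ?S = prod f ?S"
    using assms(3,4) by (intro prod.cong) auto
  also have "\<dots> = Prod_any f"
    by (simp add: Prod_any.expand_set)
  finally show ?thesis .
qed

lemma prod_if_count:
  fixes a b :: "'a::comm_monoid_mult"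
  assumes "finite S"
  shows "(\<Prod>l\<in>S. if P l then a else b) = a ^ card {l\<in>S. P l} * b ^ (card S - card {l\<in>S. P l})"
proof -
  have "S \<inter> - {l. P l} = S - {l\<in>S. P l}" "S \<inter> {l. P l} = {l\<in>S. P l}" by auto
  then show ?thesis using assms by (simp add: prod.If_cases card_Diff_subset)
qed

lemma hop_weight_identity:
  fixes x t :: "'a::field"
  assumes "t \<noteq> 0" "m \<le> n"
  shows "(t - 1) * x * ((- x) ^ m * (t * x) ^ (n - m)) =
    (x * t) ^ (n + 1) * ((1 - t) * inverse ((- t) ^ (m + 1)))"
proof -
  obtain k where n: "n = m + k" using assms(2) le_Suc_ex by blast
  have "(x * t) ^ (n + 1) * ((1 - t) * inverse ((- t) ^ (m + 1)))
      = x ^ (m + k + 1) * t ^ k * (t ^ (m + 1) * inverse ((- t) ^ (m + 1))) * (1 - t)"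
    unfolding n by (simp add: power_mult_distrib power_add field_simps)
  also have "t ^ (m + 1) * inverse ((- t) ^ (m + 1)) = (- 1) ^ (m + 1)"
    using assms(1) by (simp add: power_minus' field_simps)
  finally show ?thesis
    unfolding n by (simp add: power_mult_distrib power_add power_minus' field_simps)
qed

lemma prod_row_weight_hop:
  fixes x t :: "'a::field"
  assumes "t \<noteq> 0" "i < j" "\<sigma> i" "\<not> \<sigma>' i" "\<not> \<sigma> j" "\<sigma>' j"
    and "\<And>l. i < l \<Longrightarrow> l < j \<Longrightarrow> \<sigma>' l = \<sigma> l"
    and "\<not> h (i - 1)" "\<And>l. i \<le> l \<Longrightarrow> l < j \<Longrightarrow> h l" "\<not> h j"
  shows "(\<Prod>l\<in>{i..j}. row_weight x t \<sigma> \<sigma>' h l) = (x * t) ^ nat (j - i) * hop_coeff t \<sigma> i j"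
proof -
  let ?S = "{i<..<j}"
  let ?m = "card {l\<in>?S. \<sigma> l}"
  have "i \<notin> insert j ?S" "j \<notin> ?S" using assms(2) by auto
  moreover have "{i..j} = insert i (insert j ?S)" using assms(2) by auto
  moreover have "row_weight x t \<sigma> \<sigma>' h i = (t - 1) * x" "row_weight x t \<sigma> \<sigma>' h j = 1"
    using assms(2-6,8,10) assms(9)[of i] assms(9)[of "j - 1"]
    by (simp_all add: row_weight_def Omega_def)
  moreover have "row_weight x t \<sigma> \<sigma>' h l = (if \<sigma> l then - x else t * x)" if "l \<in> ?S" for l
    using that assms(7,9)[of l] assms(9)[of "l - 1"] by (simp add: row_weight_def Omega_def)
  ultimately have "(\<Prod>l\<in>{i..j}. row_weight x t \<sigma> \<sigma>' h l) =
      (t - 1) * x * ((- x) ^ ?m * (t * x) ^ (card ?S - ?m))"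
    by (simp add: prod_if_count)
  also have "\<dots> = (x * t) ^ (card ?S + 1) * hop_coeff t \<sigma> i j"
  proof -
    have between: "{k. i < k \<and> k < j \<and> \<sigma> k} = {l\<in>?S. \<sigma> l}" by auto
    show ?thesis
      unfolding hop_coeff_def between
      by (rule hop_weight_identity[OF assms(1)]) (rule card_mono; auto)
  qed
  also have "card ?S + 1 = nat (j - i)" using assms(2) by simp
  finally show ?thesis .
qed

fun hop_edges :: "(int \<times> int) list \<Rightarrow> int \<Rightarrow> bool" where
  "hop_edges [] = (\<lambda>_. False)"
| "hop_edges ((i, j) # r) = (\<lambda>l. (i \<le> l \<and> l < j) \<or> hop_edges r l)"

lemma hops_beyond:
  assumes "\<And>k. k \<in> set (endpoints r) \<Longrightarrow> j < k" "l \<le> j"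
  shows "apply_hops r \<sigma> l = \<sigma> l \<and> \<not> hop_edges r l"
proof
  show "apply_hops r \<sigma> l = \<sigma> l" using assms by (intro apply_hops_outside) force
  show "\<not> hop_edges r l" using assms by (induction r rule: endpoints.induct) force+
qed

lemma row_config_add_hop:
  assumes "row_config \<sigma> \<tau> h" "i < j" "\<sigma> i" "\<not> \<sigma> j"
    and left: "\<And>l. l \<le> j \<Longrightarrow> \<tau> l = \<sigma> l \<and> \<not> h l"
  shows "row_config \<sigma> (\<tau>(i := False, j := True)) (\<lambda>l. (i \<le> l \<and> l < j) \<or> h l)"
  unfolding row_config_def
proof
  obtain N where "\<forall>l. \<bar>l\<bar> \<ge> N \<longrightarrow> \<not> h l" using assms(1) unfolding row_config_def by blast
  then show "\<exists>N. \<forall>l. \<bar>l\<bar> \<ge> N \<longrightarrow> \<not> ((i \<le> l \<and> l < j) \<or> h l)"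
    by (intro exI[of _ "max N (\<bar>i\<bar> + \<bar>j\<bar> + 1)"]) auto
  show "\<forall>l. allowed ((i \<le> l - 1 \<and> l - 1 < j) \<or> h (l - 1)) (\<sigma> l) ((i \<le> l \<and> l < j) \<or> h l)
      ((\<tau>(i := False, j := True)) l)"
  proof
    fix l
    have old: "allowed (h (l - 1)) (\<sigma> l) (h l) (\<tau> l)" using assms(1) unfolding row_config_def by blast
    consider "l < i" | "l = i" | "i < l \<and> l < j" | "l = j" | "j < l" by force
    then show "allowed ((i \<le> l - 1 \<and> l - 1 < j) \<or> h (l - 1)) (\<sigma> l) ((i \<le> l \<and> l < j) \<or> h l)
      ((\<tau>(i := False, j := True)) l)"
    proof cases
      case 3
      then show ?thesis using left[of l] by (cases "\<sigma> l") (auto simp: allowed_def)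
    qed (use old assms(2-4) left[of l] left[of "l - 1"] in \<open>auto simp: allowed_def\<close>)
  qed
qed

lemma Prod_any_row_weight_add_hop:
  fixes x t :: "'a::field"
  assumes "t \<noteq> 0" "maya \<sigma>" "maya \<tau>" "row_config \<sigma> \<tau> h" "i < j" "\<sigma> i" "\<not> \<sigma> j"
    and left: "\<And>l. l \<le> j \<Longrightarrow> \<tau> l = \<sigma> l \<and> \<not> h l"
  shows "Prod_any (row_weight x t \<sigma> (\<tau>(i := False, j := True)) (\<lambda>l. (i \<le> l \<and> l < j) \<or> h l)) =
    (x * t) ^ nat (j - i) * hop_coeff t \<sigma> i j * Prod_any (row_weight x t \<sigma> \<tau> h)"
proof -
  let ?\<tau>' = "\<tau>(i := False, j := True)" and ?h' = "\<lambda>l. (i \<le> l \<and> l < j) \<or> h l"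
  have "Prod_any (row_weight x t \<sigma> ?\<tau>' ?h') =
      Prod_any (row_weight x t \<sigma> \<tau> h) * (\<Prod>l\<in>{i..j}. row_weight x t \<sigma> ?\<tau>' ?h' l)"
  proof (rule Prod_any_eq_mult_prod)
    show "finite {l. row_weight x t \<sigma> \<tau> h l \<noteq> 1}"
      using assms(2-4) by (rule finite_row_weight_ne_1[rotated])
    show "row_weight x t \<sigma> ?\<tau>' ?h' l = row_weight x t \<sigma> \<tau> h l" if "l \<notin> {i..j}" for l
      using that assms(5) by (auto simp: row_weight_def)
    show "row_weight x t \<sigma> \<tau> h l = 1" if "l \<in> {i..j}" for l
      using that left[of l] left[of "l - 1"] by (intro row_weight_empty_edge) auto
  qed simp
  also have "(\<Prod>l\<in>{i..j}. row_weight x t \<sigma> ?\<tau>' ?h' l) = (x * t) ^ nat (j - i) * hop_coeff t \<sigma> i j"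
    using assms(1,5-7) left by (intro prod_row_weight_hop) auto
  finally show ?thesis by (simp only: mult_ac)
qed

lemma row_config_hop_edges:
  assumes "sorted_wrt (<) (endpoints ps)" "hops_enabled \<sigma> ps"
  shows "row_config \<sigma> (apply_hops ps \<sigma>) (hop_edges ps)"
  using assms
proof (induction ps rule: endpoints.induct)
  case 1
  have "allowed False (\<sigma> l) False (\<sigma> l)" for l by (cases "\<sigma> l") (auto simp: allowed_def)
  then show ?case by (simp add: row_config_def)
next
  case (2 i j r)
  then have "row_config \<sigma> (apply_hops r \<sigma>) (hop_edges r)" by simp
  then show ?case
    unfolding apply_hops.simps hop_edges.simps
    by (rule row_config_add_hop) (use 2 hops_beyond[of r j] in auto)
qed

lemma Prod_any_row_weight_hop_edges:
  fixes x t :: "'a::field"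
  assumes "t \<noteq> 0" "maya \<sigma>" "sorted_wrt (<) (endpoints ps)" "hops_enabled \<sigma> ps"
  shows "Prod_any (row_weight x t \<sigma> (apply_hops ps \<sigma>) (hop_edges ps)) =
    (x * t) ^ degree_of ps * hops_coeff t \<sigma> ps"
  using assms(3,4)
proof (induction ps rule: endpoints.induct)
  case 1
  have "row_weight x t \<sigma> \<sigma> (\<lambda>_. False) = (\<lambda>_. 1)"
    by (rule ext) (simp add: row_weight_empty_edge)
  then show ?case by (simp add: degree_of_def)
next
  case (2 i j r)
  then have IH: "Prod_any (row_weight x t \<sigma> (apply_hops r \<sigma>) (hop_edges r)) =
      (x * t) ^ degree_of r * hops_coeff t \<sigma> r"
    by simp
  have step: "Prod_any (row_weight x t \<sigma> (apply_hops ((i, j) # r) \<sigma>) (hop_edges ((i, j) # r))) =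
      (x * t) ^ nat (j - i) * hop_coeff t \<sigma> i j * Prod_any (row_weight x t \<sigma> (apply_hops r \<sigma>) (hop_edges r))"
    unfolding apply_hops.simps hop_edges.simps
    using 2 hops_beyond[of r j]
    by (intro Prod_any_row_weight_add_hop assms(1,2) maya_apply_hops row_config_hop_edges) auto
  have "degree_of ((i, j) # r) = nat (j - i) + degree_of r" by (simp add: degree_of_def)
  then show ?case unfolding step IH by (simp only: hops_coeff.simps power_add mult_ac)
qed

lemma first_run:
  fixes h :: "int \<Rightarrow> bool"
  assumes "finite {l. h l}" "h l0"
  obtains a b where "a < b" "\<And>l. l < a \<Longrightarrow> \<not> h l" "\<And>l. a \<le> l \<Longrightarrow> l < b \<Longrightarrow> h l" "\<not> h b"
proof -
  let ?S = "{l. h l}"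
  define a where "a = Min ?S"
  have "h a" "a \<le> l0" and below: "\<And>l. l < a \<Longrightarrow> \<not> h l"
    using assms Min_in[of ?S] Min_le[of ?S] unfolding a_def by (auto simp: not_le[symmetric])
  have "l0 \<le> Max ?S" "\<not> h (Max ?S + 1)"
    using assms Max_ge[of ?S] by fastforce+
  define n where "n = (LEAST n. \<not> h (a + int n))"
  have end_run: "\<not> h (a + int n)"
    unfolding n_def
    by (rule LeastI[of _ "nat (Max ?S + 1 - a)"]) (use \<open>a \<le> l0\<close> \<open>l0 \<le> Max ?S\<close> \<open>\<not> h (Max ?S + 1)\<close> in simp)
  have run: "h (a + int m)" if "m < n" for m
    using not_less_Least[of m "\<lambda>n. \<not> h (a + int n)"] that unfolding n_def by blast
  have "n \<noteq> 0" using end_run \<open>h a\<close> by (intro notI) simp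
  show thesis
  proof (rule that[of a "a + int n"])
    show "h l" if "a \<le> l" "l < a + int n" for l
      using run[of "nat (l - a)"] that by simp
  qed (use \<open>n \<noteq> 0\<close> below end_run in auto)
qed

lemma allowed_empty_edges: "allowed False N False N"
  unfolding allowed_def by (cases N) auto

lemma row_config_remove_first_hop:
  assumes rc: "row_config \<sigma> \<sigma>' h" and "h l0"
  obtains a b \<tau> g where "a < b" "\<sigma> a" "\<not> \<sigma> b" "\<And>l. l \<le> b \<Longrightarrow> \<tau> l = \<sigma> l \<and> \<not> g l"
    "row_config \<sigma> \<tau> g" "\<sigma>' = \<tau>(a := False, b := True)" "{l. g l} \<subset> {l. h l}"
proof -
  obtain a b where "a < b" and below: "\<And>l. l < a \<Longrightarrow> \<not> h l"
    and run: "\<And>l. a \<le> l \<Longrightarrow> l < b \<Longrightarrow> h l" and "\<not> h b"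
    using first_run[OF finite_row_config_edges[OF rc] \<open>h l0\<close>] by blast
  have al: "\<And>l. allowed (h (l - 1)) (\<sigma> l) (h l) (\<sigma>' l)" using rc unfolding row_config_def by blast
  have a: "\<sigma> a \<and> \<not> \<sigma>' a" using al[of a] below[of "a - 1"] run[of a] \<open>a < b\<close>
    by (auto simp: allowed_def)
  have b: "\<not> \<sigma> b \<and> \<sigma>' b" using al[of b] run[of "b - 1"] \<open>\<not> h b\<close> \<open>a < b\<close>
    by (auto simp: allowed_def)
  have same: "\<sigma> l = \<sigma>' l" if "l < a \<or> a < l \<and> l < b" for l
  proof -
    have "h (l - 1) = h l" using that below run by auto
    then show ?thesis using al[of l] by (intro allowed_same_edges[of "h l"]) simp
  qed
  define \<tau> where "\<tau> = \<sigma>'(a := True, b := False)"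
  define g where "g = (\<lambda>l. h l \<and> b \<le> l)"
  have left: "\<tau> l = \<sigma> l \<and> \<not> g l" if le: "l \<le> b" for l
  proof -
    consider "l = a" | "l = b" | "l < a \<or> a < l \<and> l < b" using le by force
    then show ?thesis using a b same[of l] \<open>\<not> h b\<close> \<open>a < b\<close> by cases (auto simp: \<tau>_def g_def)
  qed
  have "row_config \<sigma> \<tau> g"
    unfolding row_config_def
  proof
    show "\<exists>N. \<forall>l. \<bar>l\<bar> \<ge> N \<longrightarrow> \<not> g l" using rc unfolding row_config_def g_def by blast
    show "\<forall>l. allowed (g (l - 1)) (\<sigma> l) (g l) (\<tau> l)"
    proof
      fix l
      show "allowed (g (l - 1)) (\<sigma> l) (g l) (\<tau> l)"
      proof (cases "l \<le> b")
        case True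
        then show ?thesis using left[of l] left[of "l - 1"] allowed_empty_edges by simp
      next
        case False
        then show ?thesis using al[of l] \<open>a < b\<close> by (simp add: \<tau>_def g_def)
      qed
    qed
  qed
  moreover have "\<sigma>' = \<tau>(a := False, b := True)" using a b by (auto simp: \<tau>_def fun_eq_iff)
  moreover have "{l. g l} \<subset> {l. h l}" using run[of a] \<open>a < b\<close> by (force simp: g_def)
  ultimately show thesis using that \<open>a < b\<close> a b left by blast
qed

lemma row_config_obtain_hops:
  assumes "row_config \<sigma> \<sigma>' h"
  obtains ps where "sorted_wrt (<) (endpoints ps)" "hops_enabled \<sigma> ps" "apply_hops ps \<sigma> = \<sigma>'"
  using assms
proof (induction "card {l. h l}" arbitrary: \<sigma>' h thesis rule: less_induct)
  case less
  show ?case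
  proof (cases "\<exists>l. h l")
    case False
    have "\<sigma>' = \<sigma>"
    proof
      fix l
      show "\<sigma>' l = \<sigma> l"
        using less.prems(2) False allowed_same_edges[of False "\<sigma> l" "\<sigma>' l"]
        unfolding row_config_def by auto
    qed
    then show ?thesis using less.prems(1)[of "[]"] by simp
  next
    case True
    then obtain l0 where "h l0" by blast
    obtain a b \<tau> g where "a < b" "\<sigma> a" "\<not> \<sigma> b" and left: "\<And>l. l \<le> b \<Longrightarrow> \<tau> l = \<sigma> l \<and> \<not> g l"
      and rc: "row_config \<sigma> \<tau> g" and \<sigma>': "\<sigma>' = \<tau>(a := False, b := True)" and "{l. g l} \<subset> {l. h l}"
      using row_config_remove_first_hop[OF less.prems(2) \<open>h l0\<close>] by blast
    then have "card {l. g l} < card {l. h l}"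
      using finite_row_config_edges[OF less.prems(2)] by (intro psubset_card_mono)
    then obtain ps where ps: "sorted_wrt (<) (endpoints ps)" "hops_enabled \<sigma> ps" "apply_hops ps \<sigma> = \<tau>"
      using less.hyps rc by blast
    then have "set (endpoints ps) = {l. \<sigma> l \<noteq> \<tau> l}" by (simp add: set_endpoints_eq_differ)
    then have "\<forall>k\<in>set (endpoints ps). a < k \<and> b < k" using left \<open>a < b\<close> by force
    then show ?thesis
      using less.prems(1)[of "(a, b) # ps"] ps \<sigma>' \<open>a < b\<close> \<open>\<sigma> a\<close> \<open>\<not> \<sigma> b\<close> by auto
  qed
qed

lemma row_configs_eq_hop_edges_image:
  "{h. row_config \<sigma> \<sigma>' h} =
    hop_edges ` {ps. sorted_wrt (<) (endpoints ps) \<and> hops_enabled \<sigma> ps \<and> apply_hops ps \<sigma> = \<sigma>'}"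
proof (intro equalityI subsetI)
  fix h
  assume "h \<in> {h. row_config \<sigma> \<sigma>' h}"
  then have rc: "row_config \<sigma> \<sigma>' h" by simp
  then obtain ps where ps: "sorted_wrt (<) (endpoints ps)" "hops_enabled \<sigma> ps" "apply_hops ps \<sigma> = \<sigma>'"
    by (rule row_config_obtain_hops)
  then have "h = hop_edges ps" using row_config_hop_edges row_config_unique[OF rc] by blast
  with ps show "h \<in> hop_edges ` {ps. sorted_wrt (<) (endpoints ps) \<and> hops_enabled \<sigma> ps \<and> apply_hops ps \<sigma> = \<sigma>'}"
    by blast
qed (auto intro: row_config_hop_edges)

lemma pair_A_op_basis:
  fixes x t :: "'a::field"
  assumes "t \<noteq> 0" "maya \<sigma>"
  shows "pair (basis \<sigma>') (A_op x t (basis \<sigma>)) = (if \<sigma> = \<sigma>' then 1 else 0) +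
    (\<Sum>ps. if ps \<noteq> [] \<and> sorted_wrt (<) (endpoints ps) \<and> hops_enabled \<sigma> ps \<and> apply_hops ps \<sigma> = \<sigma>'
      then (x * t) ^ degree_of ps * hops_coeff t \<sigma> ps else 0)"
proof -
  have "E_prod t ps (basis \<sigma>) \<sigma>' =
      (if hops_enabled \<sigma> ps \<and> apply_hops ps \<sigma> = \<sigma>' then hops_coeff t \<sigma> ps else 0)"
    if "sorted_wrt (<) (endpoints ps)" for ps
    using E_prod_basis[OF assms that, of 1] by (simp add: scale_def basis_def)
  then show ?thesis
    unfolding pair_basis A_op_def admissible_iff_endpoints
    by (intro arg_cong2[where f = "(+)"] Sum_any.cong) (auto simp: basis_def)
qed

theorem proposition4p9:
  fixes x t :: "'a::field"
  assumes "t \<noteq> 0" and "maya \<sigma>" and "maya \<sigma>'"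
  shows "pair (basis \<sigma>') (A_op x t (basis \<sigma>)) =
    (\<Sum>h. if row_config \<sigma> \<sigma>' h
          then (\<Prod>i. Omega 1 (- x) 1 (t * x) 1 ((t - 1) * x) (h (i - 1)) (\<sigma> i) (h i) (\<sigma>' i))
          else 0)"
proof -
  let ?P = "{ps. sorted_wrt (<) (endpoints ps) \<and> hops_enabled \<sigma> ps \<and> apply_hops ps \<sigma> = \<sigma>'}"
  let ?c = "\<lambda>ps. (x * t) ^ degree_of ps * hops_coeff t \<sigma> ps"
  have single: "ps = qs" if "ps \<in> ?P" "qs \<in> ?P" for ps qs
    using that hops_unique by blast
  have "finite ?P"
  proof (cases "?P = {}")
    case True
    then show ?thesis by (simp only: finite.emptyI)
  next
    case False
    then obtain ps where "ps \<in> ?P" by blast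
    then have "?P \<subseteq> {ps}" using single by blast
    then show ?thesis by (rule finite_subset) simp
  qed
  have "pair (basis \<sigma>') (A_op x t (basis \<sigma>)) = (if \<sigma> = \<sigma>' then 1 else 0) + sum ?c (?P - {[]})"
    unfolding pair_A_op_basis[OF assms(1,2)] using \<open>finite ?P\<close>
    by (simp add: Sum_any.conditionalize conj_commute)
  also have "\<dots> = sum ?c ?P"
  proof (cases "\<sigma> = \<sigma>'")
    case True
    then have "[] \<in> ?P" by simp
    then show ?thesis unfolding sum.remove[OF \<open>finite ?P\<close> \<open>[] \<in> ?P\<close>] using True
      by (simp add: degree_of_def)
  qed simp
  also have "\<dots> = (\<Sum>ps\<in>?P. Prod_any (row_weight x t \<sigma> \<sigma>' (hop_edges ps)))"
    using Prod_any_row_weight_hop_edges[OF assms(1,2)] by (intro sum.cong) auto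
  also have "\<dots> = (\<Sum>h\<in>hop_edges ` ?P. Prod_any (row_weight x t \<sigma> \<sigma>' h))"
    by (subst sum.reindex) (use single in \<open>auto intro: inj_onI\<close>)
  also have "\<dots> = (\<Sum>h. if row_config \<sigma> \<sigma>' h then Prod_any (row_weight x t \<sigma> \<sigma>' h) else 0)"
  proof -
    have "row_config \<sigma> \<sigma>' h \<longleftrightarrow> h \<in> hop_edges ` ?P" for h
      using row_configs_eq_hop_edges_image[of \<sigma> \<sigma>'] by blast
    then show ?thesis using \<open>finite ?P\<close> by (simp only: Sum_any.conditionalize finite_imageI)
  qed
  finally show ?thesis unfolding row_weight_def .
qed

end
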